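(* Let $r\geq 1$, $k\geq 2$, $G=(N^k,\Theta)$ a downward directed lattice graph, $F$ a partial selection function, $D\subset N^k$ finite, and $\rho_D:D\to N$ with $\rho_D(x)\geq\min(x)$ for all $x\in D$. Then for all $z\in D$: if $\Phi^D_z\neq\emptyset$ then $h^\rho_D(z)=\hat{s}_D(z)<\max(z)$; if $\Phi^D_z=\emptyset$ then $h^\rho_D(z)=\rho_D(z)$ and $\hat{s}_D(z)=\max(z)$. Moreover, for any $E\subset N$ of cardinality $p\geq 2$ with $E^k\subseteq D$, $\hat{s}_D$ is regressively regular over $E$ if and only if $h^\rho_D$ is regressively regular over $E$.
   Context: $N$ denotes the nonnegative integers. For $z\in N^k$, $\max(z)$, $\min(z)$ are the max and min coordinates. A directed graph $G=(N^k,\Theta)$ is a downward directed lattice graph if every edge $(x,y)\in\Theta$ satisfies $\max(x)>\max(y)$. For finite $D$, $\Theta_D=\{(x,y)\in\Theta:x,y\in D\}$ and $G^z_D=\{x:(z,x)\in\Theta_D\}$. A partial selection function is a partial function $F: N^k\times(N^k\times N)^r\rightarrow N$ such that whenever $F(x,((y_1,n_1),\ldots,(y_r,n_r)))$ is defined it equals some $n_i$. $\hat{s}_D$: defined recursively on $\max(z)$: $\Phi^D_z$ is the set of defined values $F[z,(y_1,n_1),\ldots,(y_r,n_r)]$ over $y_1,\ldots,y_r\in G^z_D$, where $n_i=\hat{s}_D(y_i)$ if $\Phi^D_{y_i}\neq\emptyset$ and $n_i=\min(y_i)$ otherwise; $\hat{s}_D(z)=\max(z)$ if $\Phi^D_z=\emptyset$,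 else $\hat{s}_D(z)=\min\Phi^D_z$. $h^\rho_D$: defined by the same recursion, with $\Phi^D_z$ the set of defined values $F[z,(y_1,n_1),\ldots,(y_r,n_r)]$, $y_i\in G^z_D$, where $n_i=h^\rho_D(y_i)$ if $\Phi^D_{y_i}\neq\emptyset$ and $n_i=\min(y_i)$ otherwise; $h^\rho_D(z)=\rho_D(z)$ if $\Phi^D_z=\emptyset$, else $h^\rho_D(z)=\min\Phi^D_z$. Order types: $x=(n_i)$ and $y=(m_i)$ are order equivalent if $\{(i,j):n_i<n_j\}=\{(i,j):m_i<m_j\}$ and $\{(i,j):n_i=n_j\}=\{(i,j):m_i=m_j\}$. $f:D\to N$ is regressively regular over $E$ ($E^k\subseteq D$) if for each order type class in $E^k$, either $f(x)=f(y)<\min(E)$ for all $x,y$ in the class, or $f(x)\geq\min(x)$ for all $x$ in the class. *)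

theory Defs
  imports Main
begin

definition maxl :: "nat list \<Rightarrow> nat" where
  "maxl z = Max (set z)"

definition minl :: "nat list \<Rightarrow> nat" where
  "minl z = Min (set z)"

definition points :: "nat \<Rightarrow> nat list set" where
  "points k = {x. length x = k}"

definition downward_directed_lattice_graph ::
  "nat \<Rightarrow> (nat list \<times> nat list) set \<Rightarrow> bool" where
  "downward_directed_lattice_graph k \<Theta> \<longleftrightarrow>
     (\<forall>(x, y) \<in> \<Theta>. x \<in> points k \<and> y \<in> points k \<and> maxl x > maxl y)"

definition partial_selection_function ::
  "nat \<Rightarrow> nat \<Rightarrow> (nat list \<Rightarrow> (nat list \<times> nat) list \<Rightarrow> nat option) \<Rightarrow> bool" where
  "partial_selection_function k r F \<longleftrightarrow>
     (\<forall>x ys v. x \<in> points k \<and> length ys = r \<and> (\<forall>(y, n) \<in> set ys. y \<in> points k)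
        \<and> F x ys = Some v \<longrightarrow> v \<in> snd ` set ys)"

definition Theta_D :: "(nat list \<times> nat list) set \<Rightarrow> nat list set \<Rightarrow> (nat list \<times> nat list) set" where
  "Theta_D \<Theta> D = {(x, y). (x, y) \<in> \<Theta> \<and> x \<in> D \<and> y \<in> D}"

definition G_D :: "(nat list \<times> nat list) set \<Rightarrow> nat list set \<Rightarrow> nat list \<Rightarrow> nat list set" where
  "G_D \<Theta> D z = {x. (z, x) \<in> Theta_D \<Theta> D}"

text \<open>Recursive construction with fuel: stage returns the pair (Phi_z, value at z).
  Called with fuel Suc (maxl z) at z; along edges maxl strictly decreases, so the fuel never
  runs out, and this realises the recursion on max(z). The parameter dflt is the value used
  when Phi_z is empty (maxl for s-hat, rho for h).\<close>

primrec stage :: "nat \<Rightarrow> (nat list \<Rightarrow> (nat list \<times> nat) list \<Rightarrow> nat option) \<Rightarrow> nat \<Rightarrow>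
    (nat list \<times> nat list) set \<Rightarrow> nat list set \<Rightarrow> (nat list \<Rightarrow> nat) \<Rightarrow> nat list \<Rightarrow> nat set \<times> nat" where
  "stage 0 F r \<Theta> D dflt z = ({}, dflt z)"
| "stage (Suc m) F r \<Theta> D dflt z =
     (let Phi = {v. \<exists>ys. length ys = r \<and>
                     (\<forall>(y, n) \<in> set ys. y \<in> G_D \<Theta> D z \<and>
                        n = (if fst (stage m F r \<Theta> D dflt y) \<noteq> {}
                             then snd (stage m F r \<Theta> D dflt y) else minl y)) \<and>
                     F z ys = Some v}
      in (Phi, if Phi = {} then dflt z else Min Phi))"

definition PhiG where
  "PhiG F r \<Theta> D dflt z = fst (stage (Suc (maxl z)) F r \<Theta> D dflt z)"

definition hG where
  "hG F r \<Theta> D dflt z = snd (stage (Suc (maxl z)) F r \<Theta> D dflt z)"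

definition Phi_D where "Phi_D F r \<Theta> D z = PhiG F r \<Theta> D maxl z"
definition s_hat where "s_hat F r \<Theta> D z = hG F r \<Theta> D maxl z"
definition h_rho where "h_rho F r \<Theta> D \<rho> z = hG F r \<Theta> D \<rho> z"

definition order_equiv :: "nat list \<Rightarrow> nat list \<Rightarrow> bool" where
  "order_equiv x y \<longleftrightarrow> length x = length y \<and>
     {(i, j). i < length x \<and> j < length x \<and> x ! i < x ! j} =
     {(i, j). i < length y \<and> j < length y \<and> y ! i < y ! j} \<and>
     {(i, j). i < length x \<and> j < length x \<and> x ! i = x ! j} =
     {(i, j). i < length y \<and> j < length y \<and> y ! i = y ! j}"

definition cube :: "nat set \<Rightarrow> nat \<Rightarrow> nat list set" where
  "cube E k = {x. length x = k \<and> set x \<subseteq> E}"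

definition regressively_regular :: "nat \<Rightarrow> (nat list \<Rightarrow> nat) \<Rightarrow> nat set \<Rightarrow> bool" where
  "regressively_regular k f E \<longleftrightarrow>
     (\<forall>x \<in> cube E k. let C = {y \<in> cube E k. order_equiv x y} in
        (\<forall>y \<in> C. \<forall>y' \<in> C. f y = f y' \<and> f y < Min E) \<or> (\<forall>y \<in> C. f y \<ge> minl y))"

end

theory Submission
  imports Defs
begin

text \<open>The value at z is \<open>Min \<Phi>\<^sub>z\<close> when \<open>\<Phi>\<^sub>z \<noteq> {}\<close> and the default otherwise, and the
  recursion only ever reads off values at nodes with nonempty \<open>\<Phi>\<close>. Hence \<open>\<Phi>\<close> does not depend on
  the default at all, so \<open>h\<^sup>\<rho>\<^sub>D\<close> and \<open>s\<^sub>D\<close> agree wherever \<open>\<Phi>\<^sub>z \<noteq> {}\<close>. Every element of \<open>\<Phi>\<^sub>z\<close> is a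
  value \<open>n\<^sub>y\<close> passed up from a successor y, and \<open>n\<^sub>y \<le> max(y) < max(z)\<close>. Where \<open>\<Phi>\<^sub>z = {}\<close> both
  functions are at least \<open>min(z)\<close>, so on every order type class they either coincide or both
  satisfy the second alternative of regressive regularity.\<close>

lemma minl_le_maxl: "y \<noteq> [] \<Longrightarrow> minl y \<le> maxl y"
  unfolding minl_def maxl_def by (simp add: Min_le_iff)

lemma snd_stage:
  "snd (stage m F r \<Theta> D d z) =
     (if fst (stage m F r \<Theta> D d z) = {} then d z else Min (fst (stage m F r \<Theta> D d z)))"
  by (cases m) (simp, simp only: stage.simps Let_def fst_conv snd_conv)

abbreviation passed_value :: "nat \<Rightarrow> (nat list \<Rightarrow> (nat list \<times> nat) list \<Rightarrow> nat option) \<Rightarrow> nat \<Rightarrow>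
    (nat list \<times> nat list) set \<Rightarrow> nat list set \<Rightarrow> (nat list \<Rightarrow> nat) \<Rightarrow> nat list \<Rightarrow> nat" where
  "passed_value m F r \<Theta> D d y \<equiv>
     if fst (stage m F r \<Theta> D d y) \<noteq> {} then snd (stage m F r \<Theta> D d y) else minl y"

lemma fst_stage_default_indep:
  "fst (stage m F r \<Theta> D d1 z) = fst (stage m F r \<Theta> D d2 z)"
proof (induction m arbitrary: z)
  case 0
  show ?case by simp
next
  case (Suc m)
  have "passed_value m F r \<Theta> D d1 y = passed_value m F r \<Theta> D d2 y" for y
    using Suc.IH[of y] by (simp add: snd_stage)
  then show ?case by (simp add: Let_def)
qed

lemma PhiG_default_indep: "PhiG F r \<Theta> D d1 z = PhiG F r \<Theta> D d2 z"
  unfolding PhiG_def by (rule fst_stage_default_indep)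

lemma hG_eq: "hG F r \<Theta> D d z = (if PhiG F r \<Theta> D d z = {} then d z else Min (PhiG F r \<Theta> D d z))"
  unfolding hG_def PhiG_def by (rule snd_stage)

lemma fst_stage_Suc_subset:
  assumes "partial_selection_function k r F" and "z \<in> points k" and "G_D \<Theta> D z \<subseteq> points k"
  shows "fst (stage (Suc m) F r \<Theta> D d z) \<subseteq>
    passed_value m F r \<Theta> D d ` G_D \<Theta> D z"
proof
  fix v assume "v \<in> fst (stage (Suc m) F r \<Theta> D d z)"
  then obtain ys where ys: "length ys = r" and F: "F z ys = Some v"
    and succ: "\<forall>(y, n) \<in> set ys. y \<in> G_D \<Theta> D z \<and> n = passed_value m F r \<Theta> D d y"
    by (auto simp: Let_def)
  have "\<forall>(y, n) \<in> set ys. y \<in> points k" using succ assms(3) by auto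
  then have "v \<in> snd ` set ys"
    using assms(1,2) ys F unfolding partial_selection_function_def by blast
  with succ show "v \<in> passed_value m F r \<Theta> D d ` G_D \<Theta> D z" by force
qed

lemma fst_stage_less_maxl:
  assumes "k \<ge> 1" and "downward_directed_lattice_graph k \<Theta>"
    and "partial_selection_function k r F" and "D \<subseteq> points k"
  shows "z \<in> D \<Longrightarrow> v \<in> fst (stage m F r \<Theta> D d z) \<Longrightarrow> v < maxl z"
proof (induction m arbitrary: z v)
  case 0
  then show ?case by simp
next
  case (Suc m)
  have succ: "y \<in> D \<and> maxl y < maxl z" if "y \<in> G_D \<Theta> D z" for y
    using that assms(2) unfolding G_D_def Theta_D_def downward_directed_lattice_graph_def by auto
  have "G_D \<Theta> D z \<subseteq> points k" using succ assms(4) by blast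
  with Suc.prems obtain y where y: "y \<in> G_D \<Theta> D z"
    and v: "v = passed_value m F r \<Theta> D d y"
    using fst_stage_Suc_subset[OF assms(3)] assms(4) by blast
  from succ[OF y] have yD: "y \<in> D" and lt: "maxl y < maxl z" by auto
  show ?case
  proof (cases "fst (stage m F r \<Theta> D d y) = {}")
    case True
    have "y \<noteq> []" using yD assms(1,4) unfolding points_def by auto
    with True v lt show ?thesis using minl_le_maxl by fastforce
  next
    case False
    have "finite (fst (stage m F r \<Theta> D d y))"
      using Suc.IH[OF yD] by (meson finite_nat_set_iff_bounded)
    then have "v \<in> fst (stage m F r \<Theta> D d y)" using False v by (simp add: snd_stage)
    with Suc.IH[OF yD] lt show ?thesis by fastforce
  qed
qed

lemma PhiG_less_maxl:
  assumes "k \<ge> 1" and "downward_directed_lattice_graph k \<Theta>"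
    and "partial_selection_function k r F" and "D \<subseteq> points k" and "z \<in> D"
  shows "v \<in> PhiG F r \<Theta> D d z \<Longrightarrow> v < maxl z"
  unfolding PhiG_def using fst_stage_less_maxl[OF assms] .

lemma Min_le_minl_cube:
  assumes "finite E" and "k \<ge> 1" and "y \<in> cube E k"
  shows "Min E \<le> minl y"
proof -
  have "y \<noteq> []" and "set y \<subseteq> E" using assms(2,3) unfolding cube_def by auto
  then have "minl y \<in> E" unfolding minl_def using Min_in by blast
  with assms(1) show ?thesis by simp
qed

text \<open>A value below \<open>min(E)\<close> is below \<open>min(y)\<close>, so on a class where f is constant and
  regressive, g agrees with f.\<close>

lemma regressively_regular_transfer:
  assumes "finite E" and "k \<ge> 1" and "regressively_regular k f E"
    and agree: "\<forall>y \<in> cube E k. f y = g y \<or> (minl y \<le> f y \<and> minl y \<le> g y)"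
  shows "regressively_regular k g E"
  unfolding regressively_regular_def Let_def
proof
  fix x assume "x \<in> cube E k"
  let ?C = "{y \<in> cube E k. order_equiv x y}"
  from assms(3) \<open>x \<in> cube E k\<close>
  have "(\<forall>y \<in> ?C. \<forall>y' \<in> ?C. f y = f y' \<and> f y < Min E) \<or> (\<forall>y \<in> ?C. minl y \<le> f y)"
    unfolding regressively_regular_def Let_def by blast
  then show "(\<forall>y \<in> ?C. \<forall>y' \<in> ?C. g y = g y' \<and> g y < Min E) \<or> (\<forall>y \<in> ?C. minl y \<le> g y)"
  proof
    assume const: "\<forall>y \<in> ?C. \<forall>y' \<in> ?C. f y = f y' \<and> f y < Min E"
    have "f y = g y" if "y \<in> ?C" for y
    proof -
      from that have "y \<in> cube E k" by simp
      moreover from const that have "f y < Min E" by blast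
      ultimately have "\<not> minl y \<le> f y" using Min_le_minl_cube[OF assms(1,2)] by (meson leD le_less_trans)
      with agree \<open>y \<in> cube E k\<close> show ?thesis by blast
    qed
    with const have "\<forall>y \<in> ?C. \<forall>y' \<in> ?C. g y = g y' \<and> g y < Min E"
      by (metis (no_types, lifting))
    then show ?thesis ..
  next
    assume "\<forall>y \<in> ?C. minl y \<le> f y"
    with agree show ?thesis by fastforce
  qed
qed

lemma regressively_regular_iff:
  assumes "finite E" and "k \<ge> 1"
    and "\<forall>y \<in> cube E k. f y = g y \<or> (minl y \<le> f y \<and> minl y \<le> g y)"
  shows "regressively_regular k f E \<longleftrightarrow> regressively_regular k g E"
proof
  show "regressively_regular k g E" if "regressively_regular k f E"
    using regressively_regular_transfer[OF assms(1,2) that assms(3)] .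
  have "\<forall>y \<in> cube E k. g y = f y \<or> (minl y \<le> g y \<and> minl y \<le> f y)"
    using assms(3) by auto
  then show "regressively_regular k f E" if "regressively_regular k g E"
    using regressively_regular_transfer[OF assms(1,2) that] by blast
qed

lemma h_rho_eq_s_hat: "Phi_D F r \<Theta> D z \<noteq> {} \<Longrightarrow> h_rho F r \<Theta> D \<rho> z = s_hat F r \<Theta> D z"
  unfolding Phi_D_def h_rho_def s_hat_def hG_eq using PhiG_default_indep by metis

lemma h_rho_empty: "Phi_D F r \<Theta> D z = {} \<Longrightarrow> h_rho F r \<Theta> D \<rho> z = \<rho> z"
  unfolding Phi_D_def h_rho_def hG_eq using PhiG_default_indep by metis

lemma s_hat_empty: "Phi_D F r \<Theta> D z = {} \<Longrightarrow> s_hat F r \<Theta> D z = maxl z"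
  unfolding Phi_D_def s_hat_def hG_eq by simp

lemma s_hat_less_maxl:
  assumes "k \<ge> 1" and "downward_directed_lattice_graph k \<Theta>"
    and "partial_selection_function k r F" and "D \<subseteq> points k" and "z \<in> D"
    and "Phi_D F r \<Theta> D z \<noteq> {}"
  shows "s_hat F r \<Theta> D z < maxl z"
proof -
  have bound: "\<forall>v \<in> Phi_D F r \<Theta> D z. v < maxl z"
    using PhiG_less_maxl[OF assms(1-5)] unfolding Phi_D_def by blast
  then have "finite (Phi_D F r \<Theta> D z)" by (auto simp: finite_nat_set_iff_bounded)
  with bound assms(6) show ?thesis
    unfolding s_hat_def hG_eq by (simp flip: Phi_D_def)
qed

theorem mainTheorem2:
  fixes r k :: nat and \<Theta> :: "(nat list \<times> nat list) set"
    and F :: "nat list \<Rightarrow> (nat list \<times> nat) list \<Rightarrow> nat option"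
    and D :: "nat list set" and \<rho> :: "nat list \<Rightarrow> nat"
  assumes "r \<ge> 1" and "k \<ge> 2"
    and "downward_directed_lattice_graph k \<Theta>"
    and "partial_selection_function k r F"
    and "finite D" and "D \<subseteq> points k"
    and "\<forall>x \<in> D. \<rho> x \<ge> minl x"
  shows "(\<forall>z \<in> D.
            (Phi_D F r \<Theta> D z \<noteq> {} \<longrightarrow>
               h_rho F r \<Theta> D \<rho> z = s_hat F r \<Theta> D z \<and> s_hat F r \<Theta> D z < maxl z) \<and>
            (Phi_D F r \<Theta> D z = {} \<longrightarrow>
               h_rho F r \<Theta> D \<rho> z = \<rho> z \<and> s_hat F r \<Theta> D z = maxl z))
       \<and> (\<forall>E p. finite E \<and> card E = p \<and> p \<ge> 2 \<and> cube E k \<subseteq> D \<longrightarrow>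
            (regressively_regular k (s_hat F r \<Theta> D) E \<longleftrightarrow>
             regressively_regular k (h_rho F r \<Theta> D \<rho>) E))"
proof -
  have k: "k \<ge> 1" using assms(2) by simp
  have agree: "s_hat F r \<Theta> D y = h_rho F r \<Theta> D \<rho> y \<or>
      (minl y \<le> s_hat F r \<Theta> D y \<and> minl y \<le> h_rho F r \<Theta> D \<rho> y)" if "y \<in> D" for y
  proof (cases "Phi_D F r \<Theta> D y = {}")
    case True
    have "y \<noteq> []" using that assms(6) k unfolding points_def by auto
    with True that assms(7) show ?thesis by (simp add: h_rho_empty s_hat_empty minl_le_maxl)
  qed (simp add: h_rho_eq_s_hat)
  show ?thesis
  proof (intro conjI ballI allI impI)
    fix z assume "z \<in> D"
    show "h_rho F r \<Theta> D \<rho> z = s_hat F r \<Theta> D z" if "Phi_D F r \<Theta> D z \<noteq> {}"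
      using that by (rule h_rho_eq_s_hat)
    show "s_hat F r \<Theta> D z < maxl z" if "Phi_D F r \<Theta> D z \<noteq> {}"
      using s_hat_less_maxl[OF k assms(3,4,6) \<open>z \<in> D\<close> that] .
    show "h_rho F r \<Theta> D \<rho> z = \<rho> z" if "Phi_D F r \<Theta> D z = {}"
      using that by (rule h_rho_empty)
    show "s_hat F r \<Theta> D z = maxl z" if "Phi_D F r \<Theta> D z = {}"
      using that by (rule s_hat_empty)
  next
    fix E :: "nat set" and p :: nat
    assume "finite E \<and> card E = p \<and> 2 \<le> p \<and> cube E k \<subseteq> D"
    then show "regressively_regular k (s_hat F r \<Theta> D) E \<longleftrightarrow> regressively_regular k (h_rho F r \<Theta> D \<rho>) E"
      using regressively_regular_iff[OF _ k] agree by blast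
  qed
qed

end
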